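(* Let $n\ge 3$ and let $c=(c_1,\ldots,c_n)\in\{0,1,2\}^n$ be a stable configuration on the wheel graph $W_n$. Then $c$ is SSM-recurrent (resp. ASM-recurrent) if and only if there exists an orientation (resp. an acyclic orientation) $\mathcal O$ of the cycle graph $C_n$ such that $c_i\ge \mathrm{in}_{\mathcal O}(i)$ for all $i\in[n]$, where $\mathrm{in}_{\mathcal O}(i)$ is the in-degree of $i$ in $\mathcal O$.
   Context: The cycle graph $C_n$ has vertex set $[n]=\{1,\ldots,n\}$ and edges $\{i,i+1\}$ ($1\le i\le n-1$) and $\{n,1\}$. The wheel graph $W_n$ is obtained from $C_n$ by adding a vertex $0$ (the sink) adjacent to every vertex of $[n]$. Sandpile setting: a configuration on a graph with vertex set $\{0,\ldots,n\}$ and sink $0$ is $c\in\mathbb{Z}_{\ge0}^n$; vertex $i$ is stable if $c_i<\deg(i)$, $c$ stable if all $i\in[n]$ are (on $W_n$ the stable configurations are exactly $\{0,1,2\}^n$). ASM: an unstable vertex loses $\deg(i)$ grains and sends one to each neighbour (grains to the sink vanish); stabilisation is order independent; the ASM Markov chain on stable configurations adds a grain at a vertex chosen by a fully supported distribution on $[n]$ and stabilises. SSM with parameter $p\in(0,1)$: a toppling vertex sends, independently for each neighbour, one grain to that neighbour with probability $p$ (else keeps it); Markov chain defined likewise. ASM-/SSM-recurrent = recurrent state of the respective chain. Known characterisation: a stable $c$ is ASM-recurrent iff there is an acyclic orientation $\mathcal O$ of the whole graph in which $0$ is the unique vertex with all incident edges incoming ($0$-rooted) and $c_i\ge\mathrm{in}_{\mathcal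 O}(i)$ for all $i\in[n]$; SSM-recurrent iff there is such a $0$-rooted orientation, not necessarily acyclic. *)

theory Defs
  imports Main
begin

(* Wheel graph W_n: sink 0, cycle vertices 1..n, cycle edges {k, cyc_succ n k}, k = 1..n,
   plus edges {0,k}.  Every non-sink vertex has degree 3 (n >= 3). *)

definition cyc_succ :: "nat \<Rightarrow> nat \<Rightarrow> nat" where
  "cyc_succ n i = (if i = n then 1 else i + 1)"

definition cyc_pred :: "nat \<Rightarrow> nat \<Rightarrow> nat" where
  "cyc_pred n i = (if i = 1 then n else i - 1)"

(* Orientation of C_n: ori k = True means edge {k, cyc_succ n k} is directed k -> cyc_succ n k,
   ori k = False means cyc_succ n k -> k.  Only values on k in 1..n matter. *)
definition cyc_arc :: "nat \<Rightarrow> (nat \<Rightarrow> bool) \<Rightarrow> nat \<Rightarrow> nat \<Rightarrow> bool" where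
  "cyc_arc n ori u v \<longleftrightarrow> (\<exists>k\<in>{1..n}. (ori k \<and> u = k \<and> v = cyc_succ n k)
                                  \<or> (\<not> ori k \<and> u = cyc_succ n k \<and> v = k))"

definition cyc_indeg :: "nat \<Rightarrow> (nat \<Rightarrow> bool) \<Rightarrow> nat \<Rightarrow> nat" where
  "cyc_indeg n ori i = card {k\<in>{1..n}. (ori k \<and> i = cyc_succ n k) \<or> (\<not> ori k \<and> i = k)}"

definition cyc_acyclic :: "nat \<Rightarrow> (nat \<Rightarrow> bool) \<Rightarrow> bool" where
  "cyc_acyclic n ori \<longleftrightarrow> \<not> (\<exists>u. (cyc_arc n ori)\<^sup>+\<^sup>+ u u)"

(* Configurations on W_n: functions nat => nat supported on 1..n (value at the sink 0 and
   elsewhere is 0). *)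
definition wheel_stable :: "nat \<Rightarrow> (nat \<Rightarrow> nat) \<Rightarrow> bool" where
  "wheel_stable n c \<longleftrightarrow> (\<forall>i. (i \<in> {1..n} \<longrightarrow> c i < 3) \<and> (i \<notin> {1..n} \<longrightarrow> c i = 0))"

definition add_grain :: "(nat \<Rightarrow> nat) \<Rightarrow> nat \<Rightarrow> (nat \<Rightarrow> nat)" where
  "add_grain c i = c(i := c i + 1)"

(* ASM toppling of an unstable vertex i: loses deg = 3 grains, one to each neighbour;
   the grain sent to the sink vanishes. *)
definition asm_step :: "nat \<Rightarrow> (nat \<Rightarrow> nat) \<Rightarrow> (nat \<Rightarrow> nat) \<Rightarrow> bool" where
  "asm_step n c c' \<longleftrightarrow> (\<exists>i\<in>{1..n}. 3 \<le> c i \<and>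
     c' = (\<lambda>j. if j = i then c i - 3
               else if j = cyc_succ n i \<or> j = cyc_pred n i then c j + 1 else c j))"

(* SSM toppling of an unstable vertex i: for each neighbour independently a grain is sent
   with probability p in (0,1); every subset S of the neighbours {0, pred, succ} occurs
   with positive probability. *)
definition ssm_step :: "nat \<Rightarrow> (nat \<Rightarrow> nat) \<Rightarrow> (nat \<Rightarrow> nat) \<Rightarrow> bool" where
  "ssm_step n c c' \<longleftrightarrow> (\<exists>i\<in>{1..n}. 3 \<le> c i \<and>
     (\<exists>S \<subseteq> {0, cyc_pred n i, cyc_succ n i}.
        c' = (\<lambda>j. if j = i then c i - card S
                  else if j \<in> S - {0} then c j + 1 else c j)))"

(* Support of the transition kernels of the Markov chains on stable configurations:
   add a grain at some vertex (fully supported distribution) and stabilise. *)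
definition asm_trans :: "nat \<Rightarrow> (nat \<Rightarrow> nat) \<Rightarrow> (nat \<Rightarrow> nat) \<Rightarrow> bool" where
  "asm_trans n c d \<longleftrightarrow> wheel_stable n c \<and> wheel_stable n d \<and>
     (\<exists>i\<in>{1..n}. (asm_step n)\<^sup>*\<^sup>* (add_grain c i) d)"

definition ssm_trans :: "nat \<Rightarrow> (nat \<Rightarrow> nat) \<Rightarrow> (nat \<Rightarrow> nat) \<Rightarrow> bool" where
  "ssm_trans n c d \<longleftrightarrow> wheel_stable n c \<and> wheel_stable n d \<and>
     (\<exists>i\<in>{1..n}. (ssm_step n)\<^sup>*\<^sup>* (add_grain c i) d)"

(* Recurrent state of a finite Markov chain: every state reachable from c leads back to c. *)
definition asm_recurrent :: "nat \<Rightarrow> (nat \<Rightarrow> nat) \<Rightarrow> bool" where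
  "asm_recurrent n c \<longleftrightarrow> wheel_stable n c \<and>
     (\<forall>d. (asm_trans n)\<^sup>*\<^sup>* c d \<longrightarrow> (asm_trans n)\<^sup>*\<^sup>* d c)"

definition ssm_recurrent :: "nat \<Rightarrow> (nat \<Rightarrow> nat) \<Rightarrow> bool" where
  "ssm_recurrent n c \<longleftrightarrow> wheel_stable n c \<and>
     (\<forall>d. (ssm_trans n)\<^sup>*\<^sup>* c d \<longrightarrow> (ssm_trans n)\<^sup>*\<^sup>* d c)"

end

(*
  Say that c dominates an orientation O of C_n if c i >= in_O(i) for all i. Toppling preserves
  domination: when i topples, redirect the edges at i towards the neighbours that receive a grain.
  A full ASM toppling turns i into a source, so acyclicity, which on a cycle just means that O is
  not constant, survives as well. Every stable configuration reaches the all-2 configuration,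
  which dominates an acyclic orientation; hence recurrent configurations dominate (acyclic)
  orientations.

  Conversely, every configuration dominating an acyclic orientation is reached from the all-2
  configuration. If it has an empty vertex b, then b is a source, and un-toppling b (possibly
  together with a neighbour of b) yields a predecessor that again dominates an acyclic orientation
  and has more grains, or as many grains and fewer empty vertices. If it has no empty vertex, it
  lies above a configuration with a single 2 and 1 elsewhere, which a cascade of topplings around
  the cycle produces from the all-2 configuration. For the SSM the only further configuration is
  the all-1 configuration, dominating the constant orientations; it arises by a partial toppling.
*)

theory Submission
  imports Defs
begin

lemma cyc_succ_in: "v \<in> {1..n} \<Longrightarrow> cyc_succ n v \<in> {1..n}"
  unfolding cyc_succ_def by auto

lemma cyc_pred_in: "v \<in> {1..n} \<Longrightarrow> cyc_pred n v \<in> {1..n}"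
  unfolding cyc_pred_def by auto

lemma cyc_pred_succ [simp]: "v \<in> {1..n} \<Longrightarrow> cyc_pred n (cyc_succ n v) = v"
  unfolding cyc_succ_def cyc_pred_def by auto

lemma cyc_succ_pred [simp]: "v \<in> {1..n} \<Longrightarrow> cyc_succ n (cyc_pred n v) = v"
  unfolding cyc_succ_def cyc_pred_def by auto

lemma cyc_succ_eq_iff: "u \<in> {1..n} \<Longrightarrow> v \<in> {1..n} \<Longrightarrow> cyc_succ n u = v \<longleftrightarrow> u = cyc_pred n v"
  by auto

lemma cyc_pred_neq: "2 \<le> n \<Longrightarrow> v \<in> {1..n} \<Longrightarrow> cyc_pred n v \<noteq> v"
  unfolding cyc_pred_def by auto

lemma cyc_neighbours:
  assumes "3 \<le> n" and v: "v \<in> {1..n}"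
  shows "cyc_pred n v \<in> {1..n}" and "cyc_succ n v \<in> {1..n}"
    and "cyc_pred n v \<noteq> v" and "cyc_succ n v \<noteq> v" and "cyc_succ n v \<noteq> cyc_pred n v"
proof -
  show "cyc_pred n v \<in> {1..n}" "cyc_succ n v \<in> {1..n}"
    using cyc_pred_in [OF v] cyc_succ_in [OF v] .
  show "cyc_pred n v \<noteq> v" "cyc_succ n v \<noteq> v" "cyc_succ n v \<noteq> cyc_pred n v"
    using assms unfolding cyc_succ_def cyc_pred_def by auto
qed

lemma cyc_pred_pred_neq:
  assumes "3 \<le> n" and "v \<in> {1..n}"
  shows "cyc_pred n (cyc_pred n v) \<noteq> cyc_pred n v" and "cyc_pred n (cyc_pred n v) \<noteq> v"
  using assms unfolding cyc_pred_def by auto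

lemma cyc_succ_funpow:
  assumes "u \<in> {1..n}"
  shows "(cyc_succ n ^^ t) u = (u - 1 + t) mod n + 1"
proof (induction t)
  case (Suc t)
  have "0 < n" using assms by simp
  then show ?case
    using Suc by (simp add: cyc_succ_def mod_Suc)
qed (use assms in auto)

lemma cyc_succ_funpow_in: "u \<in> {1..n} \<Longrightarrow> (cyc_succ n ^^ t) u \<in> {1..n}"
  by (induction t) (use cyc_succ_in in fastforce)+

lemma cyc_succ_orbit:
  assumes u: "u \<in> {1..n}" and k: "k \<in> {1..n}"
  shows "\<exists>t<n. (cyc_succ n ^^ t) u = k"
proof (intro exI conjI)
  show "(k + n - u) mod n < n" using u by simp
  have "(u - 1 + (k + n - u) mod n) mod n = (u - 1 + (k + n - u)) mod n"
    by (rule mod_add_right_eq)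
  also have "u - 1 + (k + n - u) = (k - 1) + n"
    using u k by auto
  finally show "(cyc_succ n ^^ ((k + n - u) mod n)) u = k"
    using u k by (auto simp: cyc_succ_funpow)
qed

lemma cyc_succ_funpow_period:
  assumes u: "u \<in> {1..n}" and "(cyc_succ n ^^ t) u = u"
  shows "n dvd t"
proof -
  have "(u - 1 + t) mod n = (u - 1) mod n"
    using assms by (simp add: cyc_succ_funpow)
  then show ?thesis
    using mod_eq_dvd_iff_nat [of "u - 1" "u - 1 + t" n] by simp
qed

section \<open>Acyclic orientations of the cycle\<close>

lemma cyc_arc_iff:
  "cyc_arc n ori u v \<longleftrightarrow> u \<in> {1..n} \<and> v \<in> {1..n} \<and>
     (ori u \<and> v = cyc_succ n u \<or> \<not> ori v \<and> u = cyc_succ n v)"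
  unfolding cyc_arc_def using cyc_succ_in by blast

text \<open>A directed walk never turns back, since the edge it arrived along is oriented only one way;
  so it winds around the cycle along consistently oriented edges.\<close>

lemma cyc_arc_tranclp_cases:
  assumes "(cyc_arc n ori)\<^sup>+\<^sup>+ u w"
  shows "(\<exists>d>0. w = (cyc_succ n ^^ d) u \<and> (\<forall>t<d. ori ((cyc_succ n ^^ t) u)))
       \<or> (\<exists>d>0. u = (cyc_succ n ^^ d) w \<and> (\<forall>t<d. \<not> ori ((cyc_succ n ^^ t) w)))"
  using assms
proof (induction rule: tranclp_induct)
  case (base w)
  then show ?case
    by (auto simp: cyc_arc_iff intro!: exI [of _ 1])
next
  case (step v w)
  from step.hyps(2) have v: "v \<in> {1..n}" and w: "w \<in> {1..n}"
    and arc: "ori v \<and> w = cyc_succ n v \<or> \<not> ori w \<and> v = cyc_succ n w"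
    by (auto simp: cyc_arc_iff)
  from step.IH show ?case
  proof (elim disjE exE conjE)
    fix d assume "d > 0" and v_def: "v = (cyc_succ n ^^ d) u"
      and fwd: "\<forall>t<d. ori ((cyc_succ n ^^ t) u)"
    obtain d' where d: "d = Suc d'" using \<open>d > 0\<close> gr0_implies_Suc by blast
    have "\<not> (\<not> ori w \<and> v = cyc_succ n w)"
    proof
      assume "\<not> ori w \<and> v = cyc_succ n w"
      moreover have "(cyc_succ n ^^ d') u \<in> {1..n}"
        using step.hyps(1) by (metis cyc_arc_iff cyc_succ_funpow_in tranclpD)
      ultimately have "w = (cyc_succ n ^^ d') u"
        using v_def d w by (metis cyc_pred_succ comp_apply funpow.simps(2))
      then show False
        using fwd d \<open>\<not> ori w \<and> v = cyc_succ n w\<close> by auto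
    qed
    with arc have "ori v" "w = cyc_succ n v" by auto
    then show ?thesis
      using v_def fwd by (intro disjI1 exI [of _ "Suc d"]) (auto simp: less_Suc_eq)
  next
    fix d assume "d > 0" and u_def: "u = (cyc_succ n ^^ d) v"
      and bwd: "\<forall>t<d. \<not> ori ((cyc_succ n ^^ t) v)"
    from bwd \<open>d > 0\<close> have "\<not> ori v" by (metis funpow_0)
    with arc have "\<not> ori w" and v_eq: "v = cyc_succ n w" by auto
    have "u = (cyc_succ n ^^ Suc d) w"
      using u_def v_eq by (simp add: funpow_swap1)
    moreover have "\<forall>t<Suc d. \<not> ori ((cyc_succ n ^^ t) w)"
      using bwd \<open>\<not> ori w\<close> v_eq by (auto simp: less_Suc_eq_0_disj funpow_swap1)
    ultimately show ?thesis by blast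
  qed
qed

lemma cyc_closed_orbit_covers:
  assumes u: "u \<in> {1..n}" and "0 < d" and closed: "(cyc_succ n ^^ d) u = u"
    and P: "\<forall>t<d. P ((cyc_succ n ^^ t) u)" and k: "k \<in> {1..n}"
  shows "P k"
proof -
  have "n \<le> d"
    using cyc_succ_funpow_period [OF u closed] \<open>0 < d\<close> by (simp add: dvd_imp_le)
  with cyc_succ_orbit [OF u k] P show ?thesis by auto
qed

lemma cyc_succ_funpow_n:
  assumes "u \<in> {1..n}"
  shows "(cyc_succ n ^^ n) u = u"
proof -
  have "(cyc_succ n ^^ n) u = (u - 1 + n) mod n + 1"
    using assms by (rule cyc_succ_funpow)
  also have "\<dots> = (u - 1) mod n + 1"
    by (simp only: mod_add_self2)
  finally show ?thesis
    using assms by auto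
qed

lemma cyc_arc_forward: "v \<in> {1..n} \<Longrightarrow> ori v \<Longrightarrow> cyc_arc n ori v (cyc_succ n v)"
  unfolding cyc_arc_def by blast

lemma cyc_arc_backward: "v \<in> {1..n} \<Longrightarrow> \<not> ori v \<Longrightarrow> cyc_arc n ori (cyc_succ n v) v"
  unfolding cyc_arc_def by blast

lemma cyc_arc_tranclp_forward:
  assumes u: "u \<in> {1..n}" and all: "\<forall>k\<in>{1..n}. ori k"
  shows "(cyc_arc n ori)\<^sup>+\<^sup>+ u ((cyc_succ n ^^ Suc t) u)"
proof (induction t)
  case (Suc t)
  have "(cyc_succ n ^^ Suc t) u \<in> {1..n}"
    using u by (rule cyc_succ_funpow_in)
  then have "cyc_arc n ori ((cyc_succ n ^^ Suc t) u) (cyc_succ n ((cyc_succ n ^^ Suc t) u))"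
    using all by (intro cyc_arc_forward) blast+
  with Suc show ?case by simp
qed (use u all cyc_arc_forward in auto)

lemma cyc_arc_tranclp_backward:
  assumes u: "u \<in> {1..n}" and none: "\<forall>k\<in>{1..n}. \<not> ori k"
  shows "(cyc_arc n ori)\<^sup>+\<^sup>+ ((cyc_succ n ^^ Suc t) u) u"
proof (induction t)
  case (Suc t)
  have "(cyc_succ n ^^ Suc t) u \<in> {1..n}"
    using u by (rule cyc_succ_funpow_in)
  then have "cyc_arc n ori (cyc_succ n ((cyc_succ n ^^ Suc t) u)) ((cyc_succ n ^^ Suc t) u)"
    using none by (intro cyc_arc_backward) blast+
  with Suc show ?case by (simp add: tranclp_into_tranclp2)
qed (use u none cyc_arc_backward in auto)

lemma cyc_acyclic_imp_nonconstant:
  assumes "0 < n" and acyclic: "cyc_acyclic n ori"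
  shows "\<exists>j\<in>{1..n}. \<exists>k\<in>{1..n}. ori j \<and> \<not> ori k"
proof (rule ccontr)
  assume "\<not> ?thesis"
  then consider (forward) "\<forall>k\<in>{1..n}. ori k" | (backward) "\<forall>k\<in>{1..n}. \<not> ori k"
    by blast
  moreover have one: "1 \<in> {1..n}" and "n = Suc (n - 1)"
    using assms(1) by auto
  then have closed: "(cyc_succ n ^^ Suc (n - 1)) 1 = 1"
    using cyc_succ_funpow_n [OF one] by simp
  ultimately have "(cyc_arc n ori)\<^sup>+\<^sup>+ 1 1"
  proof cases
    case forward
    from cyc_arc_tranclp_forward [OF one this, of "n - 1"] show ?thesis
      unfolding closed .
  next
    case backward
    from cyc_arc_tranclp_backward [OF one this, of "n - 1"] show ?thesis
      unfolding closed .
  qed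
  with acyclic show False
    unfolding cyc_acyclic_def by blast
qed

lemma cyc_acyclic_if_nonconstant:
  assumes j: "j \<in> {1..n}" "ori j" and k: "k \<in> {1..n}" "\<not> ori k"
  shows "cyc_acyclic n ori"
  unfolding cyc_acyclic_def
proof
  assume "\<exists>u. (cyc_arc n ori)\<^sup>+\<^sup>+ u u"
  then obtain u where cycle: "(cyc_arc n ori)\<^sup>+\<^sup>+ u u" by blast
  then have u: "u \<in> {1..n}" by (metis cyc_arc_iff tranclpD)
  from cyc_arc_tranclp_cases [OF cycle] show False
  proof (elim disjE exE conjE)
    fix d assume "0 < d" "u = (cyc_succ n ^^ d) u" "\<forall>t<d. ori ((cyc_succ n ^^ t) u)"
    then have "ori k"
      using cyc_closed_orbit_covers [OF u, of d ori] k by simp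
    with k show False by simp
  next
    fix d assume "0 < d" "u = (cyc_succ n ^^ d) u" "\<forall>t<d. \<not> ori ((cyc_succ n ^^ t) u)"
    then have "\<not> ori j"
      using cyc_closed_orbit_covers [OF u, of d "\<lambda>v. \<not> ori v"] j by simp
    with j show False by simp
  qed
qed

lemma cyc_acyclic_iff:
  assumes "0 < n"
  shows "cyc_acyclic n ori \<longleftrightarrow> (\<exists>j\<in>{1..n}. \<exists>k\<in>{1..n}. ori j \<and> \<not> ori k)"
proof
  assume "cyc_acyclic n ori"
  with assms show "\<exists>j\<in>{1..n}. \<exists>k\<in>{1..n}. ori j \<and> \<not> ori k"
    by (rule cyc_acyclic_imp_nonconstant)
next
  assume "\<exists>j\<in>{1..n}. \<exists>k\<in>{1..n}. ori j \<and> \<not> ori k"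
  then obtain j k where "j \<in> {1..n}" "ori j" "k \<in> {1..n}" "\<not> ori k"
    by blast
  then show "cyc_acyclic n ori"
    by (rule cyc_acyclic_if_nonconstant)
qed

section \<open>Configurations dominating an orientation\<close>

definition in_degree :: "nat \<Rightarrow> (nat \<Rightarrow> bool) \<Rightarrow> nat \<Rightarrow> nat" where
  "in_degree n ori v = of_bool (ori (cyc_pred n v)) + of_bool (\<not> ori v)"

lemma cyc_indeg_eq_in_degree:
  assumes "2 \<le> n" and v: "v \<in> {1..n}"
  shows "cyc_indeg n ori v = in_degree n ori v"
proof -
  have "{k\<in>{1..n}. ori k \<and> v = cyc_succ n k \<or> \<not> ori k \<and> v = k}
      = (if ori (cyc_pred n v) then {cyc_pred n v} else {}) \<union> (if ori v then {} else {v})"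
    using v cyc_pred_in [OF v] by auto
  moreover have "cyc_pred n v \<noteq> v"
    using assms by (rule cyc_pred_neq)
  ultimately show ?thesis
    unfolding cyc_indeg_def in_degree_def by simp
qed

lemma in_degree_cong:
  "ori' v = ori v \<Longrightarrow> ori' (cyc_pred n v) = ori (cyc_pred n v) \<Longrightarrow> in_degree n ori' v = in_degree n ori v"
  unfolding in_degree_def by simp

definition indeg_bounded :: "nat \<Rightarrow> (nat \<Rightarrow> bool) \<Rightarrow> (nat \<Rightarrow> nat) \<Rightarrow> bool" where
  "indeg_bounded n ori c \<longleftrightarrow> (\<forall>v\<in>{1..n}. in_degree n ori v \<le> c v)"

definition orientable :: "nat \<Rightarrow> (nat \<Rightarrow> nat) \<Rightarrow> bool" where
  "orientable n c \<longleftrightarrow> (\<exists>ori. indeg_bounded n ori c)"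

text \<open>The acyclic orientations of \<open>C\<^sub>n\<close> are the non-constant ones (\<open>cyc_acyclic_iff\<close>).\<close>

definition acyclic_orientable :: "nat \<Rightarrow> (nat \<Rightarrow> nat) \<Rightarrow> bool" where
  "acyclic_orientable n c \<longleftrightarrow>
     (\<exists>ori. (\<exists>j\<in>{1..n}. \<exists>k\<in>{1..n}. ori j \<and> \<not> ori k) \<and> indeg_bounded n ori c)"

lemma orientable_iff:
  "2 \<le> n \<Longrightarrow> orientable n c \<longleftrightarrow> (\<exists>ori. \<forall>i\<in>{1..n}. c i \<ge> cyc_indeg n ori i)"
  unfolding orientable_def indeg_bounded_def by (simp add: cyc_indeg_eq_in_degree)

lemma acyclic_orientable_iff:
  "2 \<le> n \<Longrightarrow> acyclic_orientable n c \<longleftrightarrow>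
     (\<exists>ori. cyc_acyclic n ori \<and> (\<forall>i\<in>{1..n}. c i \<ge> cyc_indeg n ori i))"
  unfolding acyclic_orientable_def indeg_bounded_def by (simp add: cyc_indeg_eq_in_degree cyc_acyclic_iff)

lemma acyclic_orientable_imp_orientable: "acyclic_orientable n c \<Longrightarrow> orientable n c"
  unfolding acyclic_orientable_def orientable_def by blast

lemma indeg_bounded_mono:
  "indeg_bounded n ori c \<Longrightarrow> \<forall>v\<in>{1..n}. c v \<le> c' v \<Longrightarrow> indeg_bounded n ori c'"
  unfolding indeg_bounded_def using order_trans by blast

lemma orientable_mono: "orientable n c \<Longrightarrow> \<forall>v\<in>{1..n}. c v \<le> c' v \<Longrightarrow> orientable n c'"
  unfolding orientable_def using indeg_bounded_mono by blast

lemma acyclic_orientable_mono: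
  "acyclic_orientable n c \<Longrightarrow> \<forall>v\<in>{1..n}. c v \<le> c' v \<Longrightarrow> acyclic_orientable n c'"
  unfolding acyclic_orientable_def using indeg_bounded_mono by blast

definition topple :: "nat \<Rightarrow> nat \<Rightarrow> (nat \<Rightarrow> nat) \<Rightarrow> nat \<Rightarrow> nat" where
  "topple n i c = (\<lambda>j. if j = i then c i - 3
                       else if j = cyc_succ n i \<or> j = cyc_pred n i then c j + 1 else c j)"

definition ssm_topple :: "nat \<Rightarrow> nat \<Rightarrow> nat set \<Rightarrow> (nat \<Rightarrow> nat) \<Rightarrow> nat \<Rightarrow> nat" where
  "ssm_topple n i S c = (\<lambda>j. if j = i then c i - card S else if j \<in> S - {0} then c j + 1 else c j)"

lemma asm_step_iff: "asm_step n c c' \<longleftrightarrow> (\<exists>i\<in>{1..n}. 3 \<le> c i \<and> c' = topple n i c)"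
  unfolding asm_step_def topple_def by (rule refl)

lemma asm_step_topple: "i \<in> {1..n} \<Longrightarrow> 3 \<le> c i \<Longrightarrow> asm_step n c (topple n i c)"
  unfolding asm_step_iff by blast

lemma ssm_step_iff:
  "ssm_step n c c' \<longleftrightarrow>
     (\<exists>i\<in>{1..n}. 3 \<le> c i \<and> (\<exists>S \<subseteq> {0, cyc_pred n i, cyc_succ n i}. c' = ssm_topple n i S c))"
  unfolding ssm_step_def ssm_topple_def by (rule refl)

lemma topple_eq_ssm_topple:
  assumes "3 \<le> n" and i: "i \<in> {1..n}"
  shows "topple n i c = ssm_topple n i {0, cyc_pred n i, cyc_succ n i} c"
proof -
  have "cyc_pred n i \<noteq> 0" "cyc_succ n i \<noteq> 0" "cyc_pred n i \<noteq> cyc_succ n i"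
    using cyc_neighbours [OF assms] by auto
  then have card: "card {0, cyc_pred n i, cyc_succ n i} = 3"
    and mem: "\<And>j. j \<in> {0, cyc_pred n i, cyc_succ n i} - {0} \<longleftrightarrow> j = cyc_succ n i \<or> j = cyc_pred n i"
    by auto
  show ?thesis
    unfolding topple_def ssm_topple_def card mem ..
qed

lemma asm_step_imp_ssm_step: "3 \<le> n \<Longrightarrow> asm_step n c c' \<Longrightarrow> ssm_step n c c'"
  unfolding asm_step_iff ssm_step_iff using topple_eq_ssm_topple by blast

lemma card_subset_neighbours:
  "S \<subseteq> {0, p, s} \<Longrightarrow> card S \<le> 1 + of_bool (p \<in> S) + of_bool (s \<in> S)"
proof -
  assume "S \<subseteq> {0, p, s}"
  then have "S = S \<inter> {0} \<union> S \<inter> {p} \<union> S \<inter> {s}" by blast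
  then have "card S \<le> card (S \<inter> {0} \<union> S \<inter> {p}) + card (S \<inter> {s})"
    by (metis card_Un_le)
  also have "\<dots> \<le> card (S \<inter> {0}) + card (S \<inter> {p}) + card (S \<inter> {s})"
    using card_Un_le by simp
  finally show ?thesis
    by (cases "0 \<in> S"; cases "p \<in> S"; cases "s \<in> S") auto
qed

text \<open>The edges at the toppling vertex are redirected towards the neighbours that receive a grain.\<close>

lemma indeg_bounded_ssm_topple:
  assumes n: "3 \<le> n" and i: "i \<in> {1..n}" and ci: "3 \<le> c i"
    and S: "S \<subseteq> {0, cyc_pred n i, cyc_succ n i}" and bounded: "indeg_bounded n ori c"
  shows "indeg_bounded n
           (ori(cyc_pred n i := ori (cyc_pred n i) \<and> cyc_pred n i \<notin> S, i := ori i \<or> cyc_succ n i \<in> S))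
           (ssm_topple n i S c)"
    (is "indeg_bounded n ?ori' ?c'")
  unfolding indeg_bounded_def
proof
  let ?p = "cyc_pred n i" and ?s = "cyc_succ n i"
  note ps = cyc_neighbours(1,2) [OF n i]
  have dist: "?p \<noteq> i" "?s \<noteq> i" "?s \<noteq> ?p" "cyc_pred n ?p \<noteq> ?p" "cyc_pred n ?p \<noteq> i"
    using cyc_neighbours(3-5) [OF n i] cyc_pred_pred_neq [OF n i] by simp_all
  have card: "card S \<le> 1 + of_bool (?p \<in> S) + of_bool (?s \<in> S)"
    using S by (rule card_subset_neighbours)
  fix v assume v: "v \<in> {1..n}"
  have bound: "in_degree n ori v \<le> c v"
    using bounded v unfolding indeg_bounded_def by blast
  consider "v = i" | "v = ?s" | "v = ?p" | "v \<noteq> i" "v \<noteq> ?s" "v \<noteq> ?p" by blast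
  then show "in_degree n ?ori' v \<le> ?c' v"
  proof cases
    case 1
    then show ?thesis
      using card ci dist by (cases "?p \<in> S"; cases "?s \<in> S") (auto simp: in_degree_def ssm_topple_def)
  next
    case 2
    then show ?thesis
      using bound dist ps i by (auto simp: in_degree_def ssm_topple_def)
  next
    case 3
    then show ?thesis
      using bound dist ps by (auto simp: in_degree_def ssm_topple_def)
  next
    case 4
    have "cyc_pred n v \<noteq> ?p" "cyc_pred n v \<noteq> i"
      using 4 v i by (metis cyc_succ_pred)+
    then have "in_degree n ?ori' v = in_degree n ori v"
      using 4 by (intro in_degree_cong) auto
    moreover have "?c' v = c v"
      using 4 S by (auto simp: ssm_topple_def)
    ultimately show ?thesis
      using bound by simp
  qed
qed

lemma ssm_step_orientable:
  assumes "3 \<le> n" and "ssm_step n c c'" and "orientable n c"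
  shows "orientable n c'"
  using assms indeg_bounded_ssm_topple unfolding ssm_step_iff orientable_def by metis

lemma asm_step_acyclic_orientable:
  assumes n: "3 \<le> n" and "asm_step n c c'" and "acyclic_orientable n c"
  shows "acyclic_orientable n c'"
proof -
  obtain i where i: "i \<in> {1..n}" "3 \<le> c i" and c': "c' = topple n i c"
    using assms(2) unfolding asm_step_iff by blast
  obtain ori where "indeg_bounded n ori c"
    using assms(3) unfolding acyclic_orientable_def by blast
  from indeg_bounded_ssm_topple [OF n i _ this, of "{0, cyc_pred n i, cyc_succ n i}"]
  have "indeg_bounded n (ori(cyc_pred n i := False, i := True)) c'"
    using c' topple_eq_ssm_topple [OF n i(1)] i by simp
  moreover note cyc_neighbours(1,3) [OF n i(1)]
  ultimately show ?thesis
    unfolding acyclic_orientable_def using i(1) by (metis fun_upd_same fun_upd_other)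
qed

lemma add_grain_ge: "c v \<le> add_grain c i v"
  unfolding add_grain_def by simp

lemma ssm_reachable_orientable:
  assumes n: "3 \<le> n" and "(ssm_trans n)\<^sup>*\<^sup>* c d" and "orientable n c"
  shows "orientable n d"
  using assms(2,3)
proof (induction rule: rtranclp_induct)
  case (step d e)
  then obtain i where "(ssm_step n)\<^sup>*\<^sup>* (add_grain d i) e"
    unfolding ssm_trans_def by blast
  moreover have "orientable n (add_grain d i)"
    using step.IH step.prems orientable_mono add_grain_ge by blast
  ultimately show ?case
    by (induction rule: rtranclp_induct) (use ssm_step_orientable [OF n] in blast)+
qed

lemma asm_reachable_acyclic_orientable:
  assumes n: "3 \<le> n" and "(asm_trans n)\<^sup>*\<^sup>* c d" and "acyclic_orientable n c"
  shows "acyclic_orientable n d"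
  using assms(2,3)
proof (induction rule: rtranclp_induct)
  case (step d e)
  then obtain i where "(asm_step n)\<^sup>*\<^sup>* (add_grain d i) e"
    unfolding asm_trans_def by blast
  moreover have "acyclic_orientable n (add_grain d i)"
    using step.IH step.prems acyclic_orientable_mono add_grain_ge by blast
  ultimately show ?case
    by (induction rule: rtranclp_induct) (use asm_step_acyclic_orientable [OF n] in blast)+
qed

lemma wheel_stable_le: "wheel_stable n c \<Longrightarrow> v \<in> {1..n} \<Longrightarrow> c v \<le> 2"
  unfolding wheel_stable_def by fastforce

lemma wheel_stable_outside: "wheel_stable n c \<Longrightarrow> v \<notin> {1..n} \<Longrightarrow> c v = 0"
  unfolding wheel_stable_def by blast

lemma wheel_stable_eqI:
  assumes "wheel_stable n c" "wheel_stable n d" "\<forall>v\<in>{1..n}. c v = d v"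
  shows "c = d"
proof
  fix v
  show "c v = d v"
  proof (cases "v \<in> {1..n}")
    case False
    then show ?thesis
      using wheel_stable_outside assms(1,2) by metis
  qed (use assms(3) in blast)
qed

definition max_config :: "nat \<Rightarrow> nat \<Rightarrow> nat" where
  "max_config n = (\<lambda>v. if v \<in> {1..n} then 2 else 0)"

definition ones :: "nat \<Rightarrow> nat \<Rightarrow> nat" where
  "ones n = (\<lambda>v. if v \<in> {1..n} then 1 else 0)"

lemma wheel_stable_max_config: "wheel_stable n (max_config n)"
  unfolding wheel_stable_def max_config_def by simp

definition mass :: "nat \<Rightarrow> (nat \<Rightarrow> nat) \<Rightarrow> nat" where
  "mass n c = (\<Sum>v\<in>{1..n}. c v)"

definition num_zeros :: "nat \<Rightarrow> (nat \<Rightarrow> nat) \<Rightarrow> nat" where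
  "num_zeros n c = card {v\<in>{1..n}. c v = 0}"

lemma mass_le: "wheel_stable n c \<Longrightarrow> mass n c \<le> 2 * n"
  unfolding mass_def using sum_mono [of "{1..n}" c "\<lambda>_. 2"] wheel_stable_le by fastforce

lemma mass_add_grain: "i \<in> {1..n} \<Longrightarrow> mass n (add_grain c i) = Suc (mass n c)"
  unfolding mass_def add_grain_def by (simp add: sum.remove)

lemma mass_topple:
  assumes n: "3 \<le> n" and i: "i \<in> {1..n}" and ci: "3 \<le> c i"
  shows "Suc (mass n (topple n i c)) = mass n c"
proof -
  let ?p = "cyc_pred n i" and ?s = "cyc_succ n i"
  note ps = cyc_neighbours(1,2) [OF n i]
  have "(\<Sum>v\<in>{1..n}. topple n i c v + 3 * of_bool (v = i))
           = (\<Sum>v\<in>{1..n}. c v + of_bool (v = ?p) + of_bool (v = ?s))"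
    using ci cyc_neighbours(3-5) [OF n i] by (intro sum.cong) (auto simp: topple_def)
  then show ?thesis
    using i ps unfolding mass_def by (simp add: sum.distrib)
qed

lemma asm_trans_add_grain:
  assumes "wheel_stable n c" "v \<in> {1..n}" "c v < 2"
  shows "asm_trans n c (add_grain c v)"
proof -
  have "wheel_stable n (add_grain c v)"
    using assms unfolding wheel_stable_def add_grain_def by auto
  then show ?thesis
    using assms unfolding asm_trans_def by blast
qed

lemma asm_reachable_mono:
  assumes "(asm_trans n)\<^sup>*\<^sup>* x c" "wheel_stable n c" "wheel_stable n c'" "\<forall>v\<in>{1..n}. c v \<le> c' v"
  shows "(asm_trans n)\<^sup>*\<^sup>* x c'"
  using assms
proof (induction "mass n c' - mass n c" arbitrary: c rule: less_induct)
  case less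
  show ?case
  proof (cases "\<forall>v\<in>{1..n}. c v = c' v")
    case True
    then show ?thesis
      using less.prems wheel_stable_eqI by metis
  next
    case False
    with less.prems(4) obtain v where v: "v \<in> {1..n}" "c v < c' v"
      using le_neq_implies_less by blast
    have "c v < 2"
      using v wheel_stable_le [OF less.prems(3)] by fastforce
    then have step: "asm_trans n c (add_grain c v)"
      using asm_trans_add_grain [OF less.prems(2) v(1)] by blast
    have "mass n c < mass n c'"
      unfolding mass_def using less.prems(4) v by (intro sum_strict_mono_ex1) auto
    then have "mass n c' - mass n (add_grain c v) < mass n c' - mass n c"
      using mass_add_grain [OF v(1)] by simp
    moreover have "(asm_trans n)\<^sup>*\<^sup>* x (add_grain c v)"
      using less.prems(1) step by simp
    moreover have "wheel_stable n (add_grain c v)"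
      using step unfolding asm_trans_def by blast
    moreover have "\<forall>u\<in>{1..n}. add_grain c v u \<le> c' u"
      using less.prems(4) v unfolding add_grain_def by auto
    ultimately show ?thesis
      using less.hyps less.prems(3) by blast
  qed
qed

lemma asm_reaches_max_config: "wheel_stable n c \<Longrightarrow> (asm_trans n)\<^sup>*\<^sup>* c (max_config n)"
  using asm_reachable_mono [of n c c "max_config n"] wheel_stable_max_config wheel_stable_le
  unfolding max_config_def by simp

lemma asm_reachable_imp_ssm_reachable:
  assumes "3 \<le> n" and "(asm_trans n)\<^sup>*\<^sup>* c d"
  shows "(ssm_trans n)\<^sup>*\<^sup>* c d"
proof -
  have "(asm_step n)\<^sup>*\<^sup>* \<le> (ssm_step n)\<^sup>*\<^sup>*"
    by (rule rtranclp_mono) (use asm_step_imp_ssm_step [OF assms(1)] in blast)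
  then have "asm_trans n \<le> ssm_trans n"
    unfolding asm_trans_def ssm_trans_def by blast
  then show ?thesis
    using assms(2) rtranclp_mono by blast
qed

lemma recurrent_iff_reachable_from:
  assumes reaches: "\<And>d. P d \<Longrightarrow> T\<^sup>*\<^sup>* d m" and closed: "\<And>d e. T d e \<Longrightarrow> P e" and "P c"
  shows "(\<forall>d. T\<^sup>*\<^sup>* c d \<longrightarrow> T\<^sup>*\<^sup>* d c) \<longleftrightarrow> T\<^sup>*\<^sup>* m c"
proof
  assume "\<forall>d. T\<^sup>*\<^sup>* c d \<longrightarrow> T\<^sup>*\<^sup>* d c"
  then show "T\<^sup>*\<^sup>* m c"
    using reaches [OF \<open>P c\<close>] by blast
next
  assume from_m: "T\<^sup>*\<^sup>* m c"
  have "T\<^sup>*\<^sup>* d c" if "T\<^sup>*\<^sup>* c d" for d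
  proof -
    from that have "P d"
      using \<open>P c\<close> closed by (cases rule: rtranclp.cases) auto
    then show ?thesis
      using reaches from_m by (meson rtranclp_trans)
  qed
  then show "\<forall>d. T\<^sup>*\<^sup>* c d \<longrightarrow> T\<^sup>*\<^sup>* d c" by blast
qed

section \<open>Symmetries of the wheel\<close>

definition cyc_automorphism :: "nat \<Rightarrow> (nat \<Rightarrow> nat) \<Rightarrow> bool" where
  "cyc_automorphism n \<sigma> \<longleftrightarrow> bij_betw \<sigma> {1..n} {1..n} \<and> (\<forall>v. v \<notin> {1..n} \<longrightarrow> \<sigma> v = v) \<and>
     (\<forall>u\<in>{1..n}. \<forall>v\<in>{1..n}.
        (\<sigma> v = cyc_succ n (\<sigma> u) \<or> \<sigma> v = cyc_pred n (\<sigma> u)) \<longleftrightarrow> (v = cyc_succ n u \<or> v = cyc_pred n u))"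

lemma cyc_automorphism_bij: "cyc_automorphism n \<sigma> \<Longrightarrow> bij_betw \<sigma> {1..n} {1..n}"
  unfolding cyc_automorphism_def by (rule conjunct1)

lemma cyc_automorphism_in: "cyc_automorphism n \<sigma> \<Longrightarrow> v \<in> {1..n} \<Longrightarrow> \<sigma> v \<in> {1..n}"
  by (rule bij_betw_apply [OF cyc_automorphism_bij])

lemma cyc_automorphism_outside: "cyc_automorphism n \<sigma> \<Longrightarrow> v \<notin> {1..n} \<Longrightarrow> \<sigma> v = v"
  unfolding cyc_automorphism_def by (elim conjE) simp

lemma cyc_automorphism_inj:
  assumes aut: "cyc_automorphism n \<sigma>"
  shows "inj \<sigma>"
proof (rule injI)
  fix x y assume eq: "\<sigma> x = \<sigma> y"
  have inj_on: "inj_on \<sigma> {1..n}"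
    using cyc_automorphism_bij [OF aut] by (rule bij_betw_imp_inj_on)
  show "x = y"
  proof (cases "x \<in> {1..n}"; cases "y \<in> {1..n}")
    assume "x \<in> {1..n}" "y \<in> {1..n}"
    then show "x = y" using eq inj_on by (simp add: inj_on_eq_iff)
  next
    assume "x \<in> {1..n}" "y \<notin> {1..n}"
    then show "x = y" using eq cyc_automorphism_in [OF aut] cyc_automorphism_outside [OF aut] by metis
  next
    assume "x \<notin> {1..n}" "y \<in> {1..n}"
    then show "x = y" using eq cyc_automorphism_in [OF aut] cyc_automorphism_outside [OF aut] by metis
  next
    assume "x \<notin> {1..n}" "y \<notin> {1..n}"
    then show "x = y" using eq cyc_automorphism_outside [OF aut] by metis
  qed
qed

lemma cyc_automorphism_adj:
  assumes aut: "cyc_automorphism n \<sigma>" and u: "u \<in> {1..n}"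
  shows "(\<sigma> v = cyc_succ n (\<sigma> u) \<or> \<sigma> v = cyc_pred n (\<sigma> u)) \<longleftrightarrow> (v = cyc_succ n u \<or> v = cyc_pred n u)"
proof (cases "v \<in> {1..n}")
  case True
  have "\<forall>u\<in>{1..n}. \<forall>v\<in>{1..n}.
          (\<sigma> v = cyc_succ n (\<sigma> u) \<or> \<sigma> v = cyc_pred n (\<sigma> u)) \<longleftrightarrow> (v = cyc_succ n u \<or> v = cyc_pred n u)"
    using aut unfolding cyc_automorphism_def by (elim conjE)
  with u True show ?thesis by blast
next
  case False
  have "cyc_succ n (\<sigma> u) \<in> {1..n}" "cyc_pred n (\<sigma> u) \<in> {1..n}"
    using cyc_succ_in cyc_pred_in cyc_automorphism_in [OF aut u] by blast+
  moreover have "cyc_succ n u \<in> {1..n}" "cyc_pred n u \<in> {1..n}"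
    using cyc_succ_in [OF u] cyc_pred_in [OF u] .
  ultimately show ?thesis
    using False cyc_automorphism_outside [OF aut False] by auto
qed

lemma wheel_stable_comp:
  assumes "cyc_automorphism n \<sigma>" and "wheel_stable n c"
  shows "wheel_stable n (c \<circ> \<sigma>)"
  unfolding wheel_stable_def
proof (intro allI conjI impI)
  fix v
  show "(c \<circ> \<sigma>) v < 3" if "v \<in> {1..n}"
    using assms(2) cyc_automorphism_in [OF assms(1) that] unfolding wheel_stable_def by simp
  show "(c \<circ> \<sigma>) v = 0" if "v \<notin> {1..n}"
    using assms(2) cyc_automorphism_outside [OF assms(1) that] that unfolding wheel_stable_def by simp
qed

lemma topple_comp:
  assumes aut: "cyc_automorphism n \<sigma>" and i: "i \<in> {1..n}"
  shows "topple n (\<sigma> i) c \<circ> \<sigma> = topple n i (c \<circ> \<sigma>)"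
proof
  fix j
  have inj: "inj \<sigma>" using aut by (rule cyc_automorphism_inj)
  have "\<sigma> j = \<sigma> i \<longleftrightarrow> j = i"
    using inj by (simp add: inj_eq)
  then show "(topple n (\<sigma> i) c \<circ> \<sigma>) j = topple n i (c \<circ> \<sigma>) j"
    using cyc_automorphism_adj [OF aut i, of j] by (simp only: topple_def comp_apply)
qed

lemma rtranclp_map:
  assumes "\<And>x y. r x y \<Longrightarrow> s (f x) (f y)" and "r\<^sup>*\<^sup>* x y"
  shows "s\<^sup>*\<^sup>* (f x) (f y)"
  using assms(2) by (induction rule: rtranclp_induct) (auto intro: rtranclp.rtrancl_into_rtrancl assms(1))

lemma cyc_automorphism_surj:
  assumes "cyc_automorphism n \<sigma>" and "i \<in> {1..n}"
  obtains i' where "i' \<in> {1..n}" and "\<sigma> i' = i"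
  using bij_betw_imp_surj_on [OF cyc_automorphism_bij [OF assms(1)]] assms(2) by (metis imageE)

lemma asm_step_comp:
  assumes aut: "cyc_automorphism n \<sigma>" and "asm_step n c d"
  shows "asm_step n (c \<circ> \<sigma>) (d \<circ> \<sigma>)"
proof -
  obtain k where k: "k \<in> {1..n}" "3 \<le> c k" and d: "d = topple n k c"
    using assms(2) unfolding asm_step_iff by blast
  obtain k' where k': "k' \<in> {1..n}" "\<sigma> k' = k"
    using cyc_automorphism_surj [OF aut k(1)] by blast
  have "d \<circ> \<sigma> = topple n k' (c \<circ> \<sigma>)"
    unfolding d k'(2) [symmetric] using aut k'(1) by (rule topple_comp)
  moreover have "3 \<le> (c \<circ> \<sigma>) k'"
    using k k' by simp
  ultimately show ?thesis
    unfolding asm_step_iff using k'(1) by blast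
qed

lemma add_grain_comp:
  assumes "cyc_automorphism n \<sigma>"
  shows "add_grain c (\<sigma> i) \<circ> \<sigma> = add_grain (c \<circ> \<sigma>) i"
proof
  fix j
  have "\<sigma> j = \<sigma> i \<longleftrightarrow> j = i"
    using cyc_automorphism_inj [OF assms] by (simp add: inj_eq)
  then show "(add_grain c (\<sigma> i) \<circ> \<sigma>) j = add_grain (c \<circ> \<sigma>) i j"
    unfolding add_grain_def by simp
qed

lemma asm_trans_comp:
  assumes aut: "cyc_automorphism n \<sigma>" and "asm_trans n c d"
  shows "asm_trans n (c \<circ> \<sigma>) (d \<circ> \<sigma>)"
proof -
  obtain i where i: "i \<in> {1..n}" and steps: "(asm_step n)\<^sup>*\<^sup>* (add_grain c i) d"
    and st: "wheel_stable n c" "wheel_stable n d"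
    using assms(2) unfolding asm_trans_def by blast
  obtain i' where i': "i' \<in> {1..n}" "\<sigma> i' = i"
    using cyc_automorphism_surj [OF aut i] by blast
  from rtranclp_map [of "asm_step n" "asm_step n" "\<lambda>x. x \<circ> \<sigma>", OF asm_step_comp [OF aut] steps]
  have "(asm_step n)\<^sup>*\<^sup>* (add_grain (c \<circ> \<sigma>) i') (d \<circ> \<sigma>)"
    unfolding add_grain_comp [OF aut, of c i', symmetric] i'(2) .
  then show ?thesis
    unfolding asm_trans_def using i'(1) wheel_stable_comp [OF aut] st by blast
qed

lemma max_config_comp: "cyc_automorphism n \<sigma> \<Longrightarrow> max_config n \<circ> \<sigma> = max_config n"
  unfolding max_config_def comp_def
  by (rule ext) (metis cyc_automorphism_in cyc_automorphism_outside)

lemma asm_reachable_comp: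
  assumes aut: "cyc_automorphism n \<sigma>" and "(asm_trans n)\<^sup>*\<^sup>* (max_config n) c"
  shows "(asm_trans n)\<^sup>*\<^sup>* (max_config n) (c \<circ> \<sigma>)"
  using rtranclp_map [of "asm_trans n" "asm_trans n" "\<lambda>x. x \<circ> \<sigma>", OF asm_trans_comp [OF aut] assms(2)]
    max_config_comp [OF aut] by simp

lemma mass_comp: "cyc_automorphism n \<sigma> \<Longrightarrow> mass n (c \<circ> \<sigma>) = mass n c"
  unfolding mass_def comp_def by (rule sum.reindex_bij_betw [OF cyc_automorphism_bij])

lemma cyc_pred_inj: "v \<in> {1..n} \<Longrightarrow> w \<in> {1..n} \<Longrightarrow> cyc_pred n v = cyc_pred n w \<longleftrightarrow> v = w"
  by (metis cyc_succ_pred)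

definition cyc_rotate :: "nat \<Rightarrow> nat \<Rightarrow> nat" where
  "cyc_rotate n v = (if v \<in> {1..n} then cyc_pred n v else v)"

lemma cyc_automorphism_rotate: "cyc_automorphism n (cyc_rotate n)"
  unfolding cyc_automorphism_def
proof (intro conjI ballI allI impI)
  show "bij_betw (cyc_rotate n) {1..n} {1..n}"
    by (rule bij_betw_byWitness [where f' = "cyc_succ n"])
      (auto simp: cyc_rotate_def cyc_pred_def cyc_succ_def)
  show "cyc_rotate n v = v" if "v \<notin> {1..n}" for v
    using that by (auto simp: cyc_rotate_def)
  fix u v assume u: "u \<in> {1..n}" and v: "v \<in> {1..n}"
  have "cyc_pred n v = cyc_succ n (cyc_pred n u) \<longleftrightarrow> v = cyc_succ n u"
    using u v by auto
  moreover have "cyc_pred n v = cyc_pred n (cyc_pred n u) \<longleftrightarrow> v = cyc_pred n u"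
    using cyc_pred_inj [OF v cyc_pred_in [OF u]] .
  ultimately show "(cyc_rotate n v = cyc_succ n (cyc_rotate n u) \<or> cyc_rotate n v = cyc_pred n (cyc_rotate n u))
      \<longleftrightarrow> (v = cyc_succ n u \<or> v = cyc_pred n u)"
    using u v by (simp add: cyc_rotate_def)
qed

definition cyc_reflect :: "nat \<Rightarrow> nat \<Rightarrow> nat" where
  "cyc_reflect n v = (if v \<in> {1..n} then Suc n - v else v)"

lemma cyc_reflect_in: "v \<in> {1..n} \<Longrightarrow> cyc_reflect n v \<in> {1..n}"
  unfolding cyc_reflect_def by auto

lemma cyc_reflect_reflect [simp]: "cyc_reflect n (cyc_reflect n v) = v"
  unfolding cyc_reflect_def by auto

lemma cyc_succ_reflect: "v \<in> {1..n} \<Longrightarrow> cyc_succ n (cyc_reflect n v) = cyc_reflect n (cyc_pred n v)"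
  unfolding cyc_reflect_def cyc_succ_def cyc_pred_def by auto

lemma cyc_pred_reflect: "v \<in> {1..n} \<Longrightarrow> cyc_pred n (cyc_reflect n v) = cyc_reflect n (cyc_succ n v)"
  unfolding cyc_reflect_def cyc_succ_def cyc_pred_def by auto

lemma cyc_automorphism_reflect: "cyc_automorphism n (cyc_reflect n)"
  unfolding cyc_automorphism_def
proof (intro conjI ballI allI impI)
  show "bij_betw (cyc_reflect n) {1..n} {1..n}"
    by (rule bij_betw_byWitness [where f' = "cyc_reflect n"]) (auto simp: cyc_reflect_def)
  show "cyc_reflect n v = v" if "v \<notin> {1..n}" for v
    using that by (auto simp: cyc_reflect_def)
  fix u v assume u: "u \<in> {1..n}"
  have inj: "cyc_reflect n x = cyc_reflect n y \<longleftrightarrow> x = y" for x y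
    by (metis cyc_reflect_reflect)
  show "(cyc_reflect n v = cyc_succ n (cyc_reflect n u) \<or> cyc_reflect n v = cyc_pred n (cyc_reflect n u))
      \<longleftrightarrow> (v = cyc_succ n u \<or> v = cyc_pred n u)"
    unfolding cyc_succ_reflect [OF u] cyc_pred_reflect [OF u] inj by blast
qed

text \<open>Under the reflection, edge \<open>k\<close> is the image of edge \<open>cyc_reflect n (cyc_succ n k)\<close> with its
  endpoints swapped, hence the negation in the reflected orientation.\<close>

lemma in_degree_reflect:
  assumes "v \<in> {1..n}"
  shows "in_degree n (\<lambda>k. \<not> ori (cyc_reflect n (cyc_succ n k))) v = in_degree n ori (cyc_reflect n v)"
  using assms cyc_pred_reflect [OF assms] cyc_pred_in [OF assms] by (simp add: in_degree_def)

lemma indeg_bounded_reflect: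
  assumes "indeg_bounded n ori c"
  shows "indeg_bounded n (\<lambda>k. \<not> ori (cyc_reflect n (cyc_succ n k))) (c \<circ> cyc_reflect n)"
  using assms cyc_reflect_in unfolding indeg_bounded_def by (simp add: in_degree_reflect)

lemma acyclic_orientable_reflect:
  assumes "acyclic_orientable n c"
  shows "acyclic_orientable n (c \<circ> cyc_reflect n)"
proof -
  obtain ori where nonconstant: "\<exists>j\<in>{1..n}. \<exists>k\<in>{1..n}. ori j \<and> \<not> ori k"
    and bounded: "indeg_bounded n ori c"
    using assms unfolding acyclic_orientable_def by (elim exE conjE) (rule that)
  then obtain j k where j: "j \<in> {1..n}" "ori j" and k: "k \<in> {1..n}" "\<not> ori k"
    by blast
  define ori' where "ori' k \<longleftrightarrow> \<not> ori (cyc_reflect n (cyc_succ n k))" for k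
  have "ori' (cyc_pred n (cyc_reflect n k))" "\<not> ori' (cyc_pred n (cyc_reflect n j))"
    using j k cyc_reflect_in unfolding ori'_def by simp_all
  moreover have "cyc_pred n (cyc_reflect n k) \<in> {1..n}" "cyc_pred n (cyc_reflect n j) \<in> {1..n}"
    using j k cyc_pred_in cyc_reflect_in by blast+
  moreover have "indeg_bounded n ori' (c \<circ> cyc_reflect n)"
    unfolding ori'_def using bounded by (rule indeg_bounded_reflect)
  ultimately show ?thesis
    unfolding acyclic_orientable_def by blast
qed

section \<open>Configurations reachable from the maximal one\<close>

text \<open>The configuration reached from the maximal one plus a grain at \<open>1\<close> after toppling
  \<open>1, \<dots>, j + 1\<close> in turn; vertex \<open>n\<close> still holds the grain sent by vertex \<open>1\<close>.\<close>

definition toppling_wave :: "nat \<Rightarrow> nat \<Rightarrow> nat \<Rightarrow> nat" where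
  "toppling_wave n j = (\<lambda>v. if v \<in> {1..n} then if v \<le> j then 1 else if v = j + 1 then 0
                          else if v = j + 2 \<or> v = n then 3 else 2 else 0)"

lemma asm_steps_toppling_wave:
  "j + 3 \<le> n \<Longrightarrow> (asm_step n)\<^sup>*\<^sup>* (add_grain (max_config n) 1) (toppling_wave n j)"
proof (induction j)
  case 0
  have "topple n 1 (add_grain (max_config n) 1) = toppling_wave n 0"
    using "0" by (auto simp: topple_def add_grain_def max_config_def toppling_wave_def cyc_succ_def cyc_pred_def)
  moreover have "asm_step n (add_grain (max_config n) 1) (topple n 1 (add_grain (max_config n) 1))"
    using "0" by (intro asm_step_topple) (auto simp: add_grain_def max_config_def)
  ultimately show ?case by simp
next
  case (Suc j)
  have "topple n (j + 2) (toppling_wave n j) = toppling_wave n (Suc j)"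
    using Suc.prems by (auto simp: topple_def toppling_wave_def cyc_succ_def cyc_pred_def)
  moreover have "asm_step n (toppling_wave n j) (topple n (j + 2) (toppling_wave n j))"
    using Suc.prems by (intro asm_step_topple) (auto simp: toppling_wave_def)
  ultimately show ?case
    using Suc by (metis add_Suc rtranclp.rtrancl_into_rtrancl Suc_leD)
qed

lemma asm_trans_max_config_ones_plus_one:
  assumes n: "3 \<le> n"
  shows "asm_trans n (max_config n) (add_grain (ones n) 1)"
proof -
  obtain m where m: "n = m + 3"
    using n by (metis add.commute le_Suc_ex)
  let ?w = "toppling_wave n m"
  have "asm_step n ?w (topple n (m + 2) ?w)"
    using m by (intro asm_step_topple) (auto simp: toppling_wave_def)
  moreover have "asm_step n (topple n (m + 2) ?w) (topple n n (topple n (m + 2) ?w))"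
    using m by (intro asm_step_topple) (auto simp: toppling_wave_def topple_def cyc_succ_def)
  moreover have "topple n n (topple n (m + 2) ?w) = add_grain (ones n) 1"
    using m by (auto simp: topple_def toppling_wave_def add_grain_def ones_def cyc_succ_def cyc_pred_def)
  ultimately have "(asm_step n)\<^sup>*\<^sup>* (add_grain (max_config n) 1) (add_grain (ones n) 1)"
    using asm_steps_toppling_wave [of m n] m by (metis order_refl rtranclp.rtrancl_into_rtrancl)
  moreover have "wheel_stable n (add_grain (ones n) 1)"
    using n by (auto simp: wheel_stable_def add_grain_def ones_def)
  moreover have "1 \<in> {1..n}"
    using n by simp
  ultimately show ?thesis
    unfolding asm_trans_def using wheel_stable_max_config by blast
qed

lemma asm_reachable_ones_plus:
  assumes n: "3 \<le> n" and "v \<in> {1..n}"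
  shows "(asm_trans n)\<^sup>*\<^sup>* (max_config n) (add_grain (ones n) v)"
  using assms(2)
proof (induction v)
  case (Suc w)
  show ?case
  proof (cases "w = 0")
    case True
    then show ?thesis
      using asm_trans_max_config_ones_plus_one [OF n] by simp
  next
    case False
    then have w: "w \<in> {1..n}" and succ_w: "cyc_succ n w = Suc w"
      using Suc.prems by (auto simp: cyc_succ_def)
    have rotate: "add_grain (ones n) (Suc w) = add_grain (ones n) w \<circ> cyc_rotate n"
    proof
      fix u
      show "add_grain (ones n) (Suc w) u = (add_grain (ones n) w \<circ> cyc_rotate n) u"
      proof (cases "u \<in> {1..n}")
        case True
        then have "cyc_pred n u = w \<longleftrightarrow> u = Suc w"
          using cyc_succ_eq_iff [OF w True] succ_w by auto
        then show ?thesis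
          using True w cyc_pred_in [OF True] by (simp add: add_grain_def ones_def cyc_rotate_def)
      next
        case False
        then show ?thesis
          using Suc.prems w by (auto simp: add_grain_def ones_def cyc_rotate_def)
      qed
    qed
    show ?thesis
      unfolding rotate by (rule asm_reachable_comp [OF cyc_automorphism_rotate Suc.IH [OF w]])
  qed
qed simp

lemma exists_in_degree_two:
  assumes j: "j \<in> {1..n}" "ori j" and k: "k \<in> {1..n}" "\<not> ori k"
  shows "\<exists>w\<in>{1..n}. in_degree n ori w = 2"
proof (rule ccontr)
  assume no_sink: "\<not> (\<exists>w\<in>{1..n}. in_degree n ori w = 2)"
  have propagate: "ori w" if "w \<in> {1..n}" "ori (cyc_pred n w)" for w
  proof -
    have "in_degree n ori w \<noteq> 2"
      using that(1) no_sink by blast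
    with that(2) show ?thesis
      unfolding in_degree_def by (cases "ori w") simp_all
  qed
  have "ori ((cyc_succ n ^^ t) j)" for t
  proof (induction t)
    case (Suc t)
    have "(cyc_succ n ^^ t) j \<in> {1..n}"
      using j(1) by (rule cyc_succ_funpow_in)
    then show ?case
      using Suc propagate [OF cyc_succ_in] by simp
  qed (use j in simp)
  then show False
    using cyc_succ_orbit [OF j(1) k(1)] k(2) by blast
qed

lemma in_degree_le_two: "in_degree n ori v \<le> 2"
  unfolding in_degree_def by simp

lemma acyclic_orientable_max_config:
  assumes "2 \<le> n"
  shows "acyclic_orientable n (max_config n)"
proof -
  have "\<exists>j\<in>{1..n}. \<exists>k\<in>{1..n}. j = (1::nat) \<and> k \<noteq> 1"
    using assms by (intro bexI [where x = 1] bexI [where x = 2]) auto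
  moreover have "indeg_bounded n (\<lambda>k. k = 1) (max_config n)"
    unfolding indeg_bounded_def max_config_def using in_degree_le_two by simp
  ultimately show ?thesis
    unfolding acyclic_orientable_def by (intro exI [of _ "\<lambda>k. k = 1"]) simp
qed

lemma asm_reachable_if_no_zero:
  assumes n: "3 \<le> n" and stable: "wheel_stable n c" and "acyclic_orientable n c"
    and no_zero: "\<forall>v\<in>{1..n}. c v \<noteq> 0"
  shows "(asm_trans n)\<^sup>*\<^sup>* (max_config n) c"
proof -
  obtain ori where nonconstant: "\<exists>j\<in>{1..n}. \<exists>k\<in>{1..n}. ori j \<and> \<not> ori k"
    and bounded: "indeg_bounded n ori c"
    using assms(3) unfolding acyclic_orientable_def by (elim exE conjE) (rule that)
  then obtain j k where j: "j \<in> {1..n}" "ori j" and k: "k \<in> {1..n}" "\<not> ori k"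
    by blast
  obtain w where w: "w \<in> {1..n}" "in_degree n ori w = 2"
    using exists_in_degree_two [OF j k] by blast
  moreover have "in_degree n ori w \<le> c w"
    using bounded w(1) unfolding indeg_bounded_def by blast
  ultimately have "c w = 2"
    using wheel_stable_le [OF stable w(1)] by simp
  then have below: "\<forall>v\<in>{1..n}. add_grain (ones n) w v \<le> c v"
    using no_zero by (auto simp: add_grain_def ones_def Suc_le_eq)
  have "wheel_stable n (add_grain (ones n) w)"
    using w(1) by (auto simp: wheel_stable_def add_grain_def ones_def)
  from asm_reachable_mono [OF asm_reachable_ones_plus [OF n w(1)] this stable below]
  show ?thesis .
qed

section \<open>Predecessors of configurations with an empty vertex\<close>

lemma in_degree_zero_iff: "in_degree n ori v = 0 \<longleftrightarrow> ori v \<and> \<not> ori (cyc_pred n v)"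
  unfolding in_degree_def by auto

lemma source_if_zero:
  assumes "indeg_bounded n ori c" and "b \<in> {1..n}" and "c b = 0"
  shows "ori b" and "\<not> ori (cyc_pred n b)"
proof -
  have "in_degree n ori b = 0"
    using assms unfolding indeg_bounded_def by (metis le_zero_eq)
  then show "ori b" "\<not> ori (cyc_pred n b)"
    unfolding in_degree_zero_iff by simp_all
qed

definition source_refill :: "nat \<Rightarrow> nat \<Rightarrow> (nat \<Rightarrow> nat) \<Rightarrow> nat \<Rightarrow> nat" where
  "source_refill n b c =
     c(b := 2, cyc_pred n b := c (cyc_pred n b) - 1, cyc_succ n b := c (cyc_succ n b) - 1)"

lemma topple_source_refill:
  assumes n: "3 \<le> n" and b: "b \<in> {1..n}" and "c b = 0"
    and "1 \<le> c (cyc_pred n b)" and "1 \<le> c (cyc_succ n b)"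
  shows "topple n b (add_grain (source_refill n b c) b) = c"
proof -
  show ?thesis
    using assms cyc_neighbours(3-5) [OF n b] by (auto simp: topple_def add_grain_def source_refill_def)
qed

lemma wheel_stable_source_refill:
  assumes n: "3 \<le> n" and stable: "wheel_stable n c" and b: "b \<in> {1..n}"
  shows "wheel_stable n (source_refill n b c)"
  using stable b cyc_neighbours(1,2) [OF n b] unfolding wheel_stable_def source_refill_def
  by (auto simp: less_imp_diff_less)

lemma indeg_bounded_source_refill:
  assumes n: "3 \<le> n" and b: "b \<in> {1..n}" and cb: "c b = 0" and bounded: "indeg_bounded n ori c"
  shows "indeg_bounded n (ori(cyc_pred n b := True, b := False)) (source_refill n b c)"
    (is "indeg_bounded n ?ori' _")
  unfolding indeg_bounded_def
proof
  let ?p = "cyc_pred n b" and ?s = "cyc_succ n b"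
  have dist: "?p \<noteq> b" "?s \<noteq> b" "?s \<noteq> ?p" "cyc_pred n ?p \<noteq> ?p" "cyc_pred n ?p \<noteq> b"
    using cyc_neighbours(3-5) [OF n b] cyc_pred_pred_neq [OF n b] by simp_all
  have source: "ori b" "\<not> ori ?p"
    using source_if_zero [OF bounded b cb] by simp_all
  fix v assume v: "v \<in> {1..n}"
  have bound: "in_degree n ori v \<le> c v"
    using bounded v unfolding indeg_bounded_def by blast
  consider "v = b" | "v = ?p" | "v = ?s" | "v \<noteq> b" "v \<noteq> ?p" "v \<noteq> ?s" by blast
  then show "in_degree n ?ori' v \<le> source_refill n b c v"
  proof cases
    case 4
    have "cyc_pred n v \<noteq> ?p" "cyc_pred n v \<noteq> b"
      using 4 cyc_succ_pred [OF v] cyc_succ_pred [OF b] by force+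
    then have "in_degree n ?ori' v = in_degree n ori v"
      using 4 by (intro in_degree_cong) auto
    then show ?thesis
      using bound 4 by (simp add: source_refill_def)
  qed (use dist b source bound in \<open>auto simp: source_refill_def in_degree_def\<close>)
qed

lemma exists_predecessor_with_fewer_zeros:
  assumes n: "3 \<le> n" and stable: "wheel_stable n c" and b: "b \<in> {1..n}" and cb: "c b = 0"
    and cp: "c (cyc_pred n b) = 2" and cs: "c (cyc_succ n b) = 2" and bounded: "indeg_bounded n ori c"
  shows "\<exists>c'. wheel_stable n c' \<and> acyclic_orientable n c' \<and>
           mass n c' = mass n c \<and> num_zeros n c' < num_zeros n c \<and> asm_trans n c' c"
proof (intro exI conjI)
  let ?p = "cyc_pred n b" and ?s = "cyc_succ n b" and ?c' = "source_refill n b c"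
  have p: "?p \<in> {1..n}" "?p \<noteq> b"
    using cyc_neighbours(1,3) [OF n b] .
  have c': "?c' = c(b := 2, ?p := 1, ?s := 1)"
    using cp cs by (simp add: source_refill_def)
  have full: "3 \<le> add_grain ?c' b b"
    using cyc_neighbours(3,4) [OF n b] unfolding c' add_grain_def by simp
  have restores: "topple n b (add_grain ?c' b) = c"
    using topple_source_refill [where c = c, OF n b cb] cp cs by simp
  show stable': "wheel_stable n ?c'"
    using n stable b by (rule wheel_stable_source_refill)
  show "asm_trans n ?c' c"
    unfolding asm_trans_def using asm_step_topple [where c = "add_grain ?c' b", OF b full] restores stable' stable b
    by auto
  show "mass n ?c' = mass n c"
    using mass_topple [where c = "add_grain ?c' b", OF n b full] mass_add_grain [OF b, of ?c'] restores
    by simp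
  have "{v\<in>{1..n}. ?c' v = 0} \<subset> {v\<in>{1..n}. c v = 0}"
    using b cb cp cs unfolding c' by auto
  then show "num_zeros n ?c' < num_zeros n c"
    unfolding num_zeros_def by (rule psubset_card_mono [rotated]) simp
  show "acyclic_orientable n ?c'"
    unfolding acyclic_orientable_def using indeg_bounded_source_refill [OF n b cb bounded] p b
    by (intro exI [of _ "ori(?p := True, b := False)"] conjI bexI [where x = "?p"] bexI [where x = b]) auto
qed

text \<open>Written with subtractions so that it also covers \<open>n = 3\<close>, where the predecessor of the
  predecessor of \<open>b\<close> is its successor and loses two grains.\<close>

definition pred_refill :: "nat \<Rightarrow> nat \<Rightarrow> (nat \<Rightarrow> nat) \<Rightarrow> nat \<Rightarrow> nat" where
  "pred_refill n b c = (\<lambda>v. if v = cyc_pred n b \<or> v = b then 2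
     else c v - of_bool (v = cyc_pred n (cyc_pred n b)) - of_bool (v = cyc_succ n b))"

lemma topple_pred_refill:
  assumes n: "3 \<le> n" and b: "b \<in> {1..n}" and "c b = 0" and "c (cyc_pred n b) = 1"
    and "1 \<le> c (cyc_pred n (cyc_pred n b))"
    and "1 + of_bool (cyc_pred n (cyc_pred n b) = cyc_succ n b) \<le> c (cyc_succ n b)"
  shows "topple n b (topple n (cyc_pred n b) (add_grain (pred_refill n b c) (cyc_pred n b))) = c"
proof -
  let ?p = "cyc_pred n b" and ?s = "cyc_succ n b" and ?pp = "cyc_pred n (cyc_pred n b)"
  have dist: "?p \<noteq> b" "?s \<noteq> b" "?s \<noteq> ?p" "?pp \<noteq> ?p" "?pp \<noteq> b"
    using cyc_neighbours(3-5) [OF n b] cyc_pred_pred_neq [OF n b] by simp_all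
  have succ_p: "cyc_succ n ?p = b"
    using b by simp
  show ?thesis
  proof
    fix v
    show "topple n b (topple n ?p (add_grain (pred_refill n b c) ?p)) v = c v"
      using assms(3-) dist unfolding topple_def add_grain_def pred_refill_def succ_p by auto
  qed
qed

lemma not_ori_pred_pred:
  assumes "b \<in> {1..n}" and "c b = 0" and "c (cyc_pred n b) = 1" and bounded: "indeg_bounded n ori c"
  shows "\<not> ori (cyc_pred n (cyc_pred n b))"
proof -
  have "in_degree n ori (cyc_pred n b) \<le> 1"
    using bounded cyc_pred_in [OF assms(1)] assms(3) unfolding indeg_bounded_def by metis
  then show ?thesis
    using source_if_zero [OF bounded assms(1,2)] unfolding in_degree_def by simp
qed

lemma pred_refill_lower_bounds:
  assumes b: "b \<in> {1..n}" and cb: "c b = 0" and cp: "c (cyc_pred n b) = 1"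
    and bounded: "indeg_bounded n ori c"
  shows "1 \<le> c (cyc_pred n (cyc_pred n b))"
    and "1 + of_bool (cyc_pred n (cyc_pred n b) = cyc_succ n b) \<le> c (cyc_succ n b)"
proof -
  let ?s = "cyc_succ n b" and ?pp = "cyc_pred n (cyc_pred n b)"
  have not_pp: "\<not> ori ?pp"
    using not_ori_pred_pred [OF b cb cp bounded] .
  have "in_degree n ori ?pp \<le> c ?pp" "in_degree n ori ?s \<le> c ?s"
    using bounded cyc_pred_in [OF cyc_pred_in [OF b]] cyc_succ_in [OF b]
    unfolding indeg_bounded_def by blast+
  moreover have "ori b"
    using source_if_zero [OF bounded b cb] by simp
  ultimately show "1 \<le> c ?pp" "1 + of_bool (?pp = ?s) \<le> c ?s"
    using not_pp b by (auto simp: in_degree_def)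
qed

lemma in_degree_pred_refill_pred_pred:
  assumes n: "3 \<le> n" and b: "b \<in> {1..n}" and cb: "c b = 0" and cp: "c (cyc_pred n b) = 1"
    and bounded: "indeg_bounded n ori c"
  shows "in_degree n (ori(cyc_pred n (cyc_pred n b) := True, cyc_pred n b := True, b := False))
           (cyc_pred n (cyc_pred n b)) \<le> pred_refill n b c (cyc_pred n (cyc_pred n b))"
proof -
  let ?p = "cyc_pred n b" and ?s = "cyc_succ n b" and ?pp = "cyc_pred n (cyc_pred n b)"
  have pp: "?pp \<in> {1..n}"
    using cyc_pred_in [OF cyc_pred_in [OF b]] .
  have dist: "?pp \<noteq> ?p" "?pp \<noteq> b" "cyc_pred n ?pp \<noteq> ?pp"
    using cyc_pred_pred_neq [OF n b] cyc_neighbours(3) [OF n pp] by simp_all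
  show ?thesis
  proof (cases "?pp = ?s")
    case True
    then show ?thesis
      using b dist by (simp add: in_degree_def)
  next
    case False
    have "cyc_pred n ?pp \<noteq> ?p"
      using dist(2) cyc_succ_pred [OF pp] cyc_succ_pred [OF b] by metis
    moreover have "cyc_pred n ?pp \<noteq> b"
      using False cyc_succ_pred [OF pp] by metis
    moreover have "in_degree n ori ?pp \<le> c ?pp"
      using bounded pp unfolding indeg_bounded_def by blast
    ultimately show ?thesis
      using False dist not_ori_pred_pred [OF b cb cp bounded] by (simp add: in_degree_def pred_refill_def)
  qed
qed

lemma indeg_bounded_pred_refill:
  assumes n: "3 \<le> n" and b: "b \<in> {1..n}" and cb: "c b = 0" and cp: "c (cyc_pred n b) = 1"
    and bounded: "indeg_bounded n ori c"
  shows "indeg_bounded n (ori(cyc_pred n (cyc_pred n b) := True, cyc_pred n b := True, b := False))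
           (pred_refill n b c)"
    (is "indeg_bounded n ?ori' _")
  unfolding indeg_bounded_def
proof
  let ?p = "cyc_pred n b" and ?s = "cyc_succ n b" and ?pp = "cyc_pred n (cyc_pred n b)"
  have dist: "?p \<noteq> b" "?s \<noteq> b" "?s \<noteq> ?p" "?pp \<noteq> ?p" "?pp \<noteq> b"
    using cyc_neighbours(3-5) [OF n b] cyc_pred_pred_neq [OF n b] by simp_all
  have source: "ori b" "\<not> ori ?p"
    using source_if_zero [OF bounded b cb] by simp_all
  fix v assume v: "v \<in> {1..n}"
  have bound: "in_degree n ori v \<le> c v"
    using bounded v unfolding indeg_bounded_def by blast
  consider "v = b" | "v = ?p" | "v = ?pp" | "v = ?s" "v \<noteq> ?pp" | "v \<notin> {b, ?p, ?pp, ?s}" by blast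
  then show "in_degree n ?ori' v \<le> pred_refill n b c v"
  proof cases
    case 3
    then show ?thesis
      using in_degree_pred_refill_pred_pred [OF n b cb cp bounded] by simp
  next
    case 4
    then show ?thesis
      using bound b dist source by (simp add: in_degree_def pred_refill_def)
  next
    case 5
    have "cyc_pred n v \<noteq> ?pp" "cyc_pred n v \<noteq> ?p" "cyc_pred n v \<noteq> b"
      using 5 cyc_succ_pred [OF v] cyc_succ_pred [OF cyc_pred_in [OF b]] cyc_succ_pred [OF b] by force+
    then have "in_degree n ?ori' v = in_degree n ori v"
      using 5 by (intro in_degree_cong) auto
    then show ?thesis
      using bound 5 by (simp add: pred_refill_def)
  qed (use dist in \<open>simp_all add: in_degree_def pred_refill_def\<close>)
qed

lemma wheel_stable_pred_refill:
  assumes stable: "wheel_stable n c" and b: "b \<in> {1..n}"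
  shows "wheel_stable n (pred_refill n b c)"
  unfolding wheel_stable_def
proof (intro allI conjI impI)
  fix v
  show "pred_refill n b c v < 3" if "v \<in> {1..n}"
  proof -
    have "c v < 3"
      using stable that unfolding wheel_stable_def by blast
    moreover have "pred_refill n b c v \<le> max 2 (c v)"
      by (simp add: pred_refill_def le_max_iff_disj)
    ultimately show ?thesis by simp
  qed
  show "pred_refill n b c v = 0" if "v \<notin> {1..n}"
  proof -
    have "v \<noteq> cyc_pred n b" "v \<noteq> b"
      using that b cyc_pred_in [OF b] by auto
    then show ?thesis
      using stable that unfolding wheel_stable_def pred_refill_def by simp
  qed
qed

lemma exists_heavier_predecessor:
  assumes n: "3 \<le> n" and stable: "wheel_stable n c" and b: "b \<in> {1..n}" and cb: "c b = 0"
    and cp: "c (cyc_pred n b) = 1" and bounded: "indeg_bounded n ori c"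
  shows "\<exists>c'. wheel_stable n c' \<and> acyclic_orientable n c' \<and> mass n c < mass n c' \<and> asm_trans n c' c"
proof (intro exI conjI)
  let ?p = "cyc_pred n b" and ?c' = "pred_refill n b c"
  let ?x = "topple n ?p (add_grain ?c' ?p)"
  have p: "?p \<in> {1..n}"
    using cyc_pred_in [OF b] .
  have "?p \<noteq> b"
    using cyc_neighbours(3) [OF n b] .
  have restores: "topple n b ?x = c"
    using topple_pred_refill [where c = c, OF n b cb cp] pred_refill_lower_bounds [OF b cb cp bounded]
    by simp
  have full_p: "3 \<le> add_grain ?c' ?p ?p"
    by (simp add: add_grain_def pred_refill_def)
  have full_b: "3 \<le> ?x b"
    using \<open>?p \<noteq> b\<close> b by (simp add: topple_def add_grain_def pred_refill_def)
  show stable': "wheel_stable n ?c'"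
    using stable b by (rule wheel_stable_pred_refill)
  have "(asm_step n)\<^sup>*\<^sup>* (add_grain ?c' ?p) c"
    using asm_step_topple [where c = "add_grain ?c' ?p", OF p full_p]
      asm_step_topple [where c = ?x, OF b full_b] restores
    by (metis r_into_rtranclp rtranclp.rtrancl_into_rtrancl)
  then show "asm_trans n ?c' c"
    unfolding asm_trans_def using stable' stable p by blast
  show "mass n c < mass n ?c'"
    using mass_topple [where c = "add_grain ?c' ?p", OF n p full_p]
      mass_topple [where c = ?x, OF n b full_b] mass_add_grain [OF p, of ?c'] restores
    by simp
  show "acyclic_orientable n ?c'"
    unfolding acyclic_orientable_def using indeg_bounded_pred_refill [OF n b cb cp bounded] p b \<open>?p \<noteq> b\<close>
    by (intro exI [of _ "ori(cyc_pred n ?p := True, ?p := True, b := False)"] conjI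
        bexI [where x = "?p"] bexI [where x = b]) auto
qed

lemma exists_heavier_predecessor_reflected:
  assumes n: "3 \<le> n" and stable: "wheel_stable n c" and b: "b \<in> {1..n}" and cb: "c b = 0"
    and cs: "c (cyc_succ n b) = 1" and bounded: "indeg_bounded n ori c"
  shows "\<exists>c'. wheel_stable n c' \<and> acyclic_orientable n c' \<and> mass n c < mass n c' \<and> asm_trans n c' c"
proof -
  let ?r = "cyc_reflect n"
  have aut: "cyc_automorphism n ?r"
    by (rule cyc_automorphism_reflect)
  have "(c \<circ> ?r) (cyc_pred n (?r b)) = 1"
    using cs cyc_pred_reflect [OF b] by simp
  with exists_heavier_predecessor [OF n wheel_stable_comp [OF aut stable] cyc_reflect_in [OF b] _ _
      indeg_bounded_reflect [OF bounded]] cb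
  obtain c' where c': "wheel_stable n c'" "acyclic_orientable n c'" "mass n (c \<circ> ?r) < mass n c'"
    "asm_trans n c' (c \<circ> ?r)"
    by auto
  have "c \<circ> ?r \<circ> ?r = c"
    by (simp add: comp_def)
  then have "asm_trans n (c' \<circ> ?r) c"
    using asm_trans_comp [OF aut c'(4)] by simp
  moreover have "mass n c < mass n (c' \<circ> ?r)"
    using c'(3) mass_comp [OF aut] by simp
  ultimately show ?thesis
    using wheel_stable_comp [OF aut c'(1)] acyclic_orientable_reflect [OF c'(2)] by blast
qed

lemma exists_predecessor:
  assumes n: "3 \<le> n" and stable: "wheel_stable n c" and "acyclic_orientable n c"
    and b: "b \<in> {1..n}" and cb: "c b = 0"
  shows "\<exists>c'. wheel_stable n c' \<and> acyclic_orientable n c' \<and>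
           (c', c) \<in> measures [\<lambda>c. 2 * n - mass n c, num_zeros n] \<and> asm_trans n c' c"
proof -
  obtain ori where bounded: "indeg_bounded n ori c"
    using assms(3) unfolding acyclic_orientable_def by (elim exE conjE) (rule that)
  let ?p = "cyc_pred n b" and ?s = "cyc_succ n b"
  have ps: "?p \<in> {1..n}" "?s \<in> {1..n}"
    using cyc_pred_in [OF b] cyc_succ_in [OF b] .
  have "in_degree n ori ?p \<le> c ?p" "in_degree n ori ?s \<le> c ?s"
    using bounded ps unfolding indeg_bounded_def by blast+
  then have "1 \<le> c ?p" "1 \<le> c ?s"
    using source_if_zero [OF bounded b cb] b by (simp_all add: in_degree_def)
  moreover have "c ?p \<le> 2" "c ?s \<le> 2"
    using wheel_stable_le [OF stable] ps by blast+
  ultimately consider "c ?p = 1" | "c ?s = 1" | "c ?p = 2" "c ?s = 2"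
    by linarith
  then show ?thesis
  proof cases
    case 1
    with exists_heavier_predecessor [OF n stable b cb _ bounded] show ?thesis
      using mass_le by fastforce
  next
    case 2
    with exists_heavier_predecessor_reflected [OF n stable b cb _ bounded] show ?thesis
      using mass_le by fastforce
  next
    case 3
    with exists_predecessor_with_fewer_zeros [OF n stable b cb _ _ bounded] show ?thesis
      by fastforce
  qed
qed

section \<open>Recurrent configurations\<close>

lemma asm_reachable_if_acyclic_orientable:
  assumes n: "3 \<le> n"
  shows "wheel_stable n c \<Longrightarrow> acyclic_orientable n c \<Longrightarrow> (asm_trans n)\<^sup>*\<^sup>* (max_config n) c"
proof (induction c rule: wf_induct [OF wf_measures [of "[\<lambda>c. 2 * n - mass n c, num_zeros n]"]])
  case (1 c)
  show ?case
  proof (cases "\<exists>b\<in>{1..n}. c b = 0")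
    case True
    then obtain b where "b \<in> {1..n}" "c b = 0"
      by blast
    with exists_predecessor [OF n "1.prems"] obtain c' where
      "wheel_stable n c'" "acyclic_orientable n c'"
      "(c', c) \<in> measures [\<lambda>c. 2 * n - mass n c, num_zeros n]" "asm_trans n c' c"
      by blast
    with "1.IH" show ?thesis
      by (meson rtranclp.rtrancl_into_rtrancl)
  next
    case False
    then have "\<forall>v\<in>{1..n}. c v \<noteq> 0"
      by auto
    then show ?thesis
      by (rule asm_reachable_if_no_zero [OF n "1.prems"])
  qed
qed

lemma asm_reachable_iff:
  assumes n: "3 \<le> n" and stable: "wheel_stable n c"
  shows "(asm_trans n)\<^sup>*\<^sup>* (max_config n) c \<longleftrightarrow> acyclic_orientable n c"
  using asm_reachable_acyclic_orientable [OF n _ acyclic_orientable_max_config]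
    asm_reachable_if_acyclic_orientable [OF n stable] n by auto

lemma in_degree_eq_one_if_constant:
  assumes "\<not> (\<exists>j\<in>{1..n}. \<exists>k\<in>{1..n}. ori j \<and> \<not> ori k)" and v: "v \<in> {1..n}"
  shows "in_degree n ori v = 1"
  using assms cyc_pred_in [OF v] unfolding in_degree_def by fastforce

lemma acyclic_orientable_if_positive_with_two:
  assumes n: "3 \<le> n" and positive: "\<forall>u\<in>{1..n}. 1 \<le> c u" and v: "v \<in> {1..n}" "c v = 2"
  shows "acyclic_orientable n c"
proof -
  have "acyclic_orientable n (add_grain (ones n) v)"
    using asm_reachable_acyclic_orientable [OF n asm_reachable_ones_plus [OF n v(1)]]
      acyclic_orientable_max_config n by simp
  moreover have "\<forall>u\<in>{1..n}. add_grain (ones n) v u \<le> c u"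
    using v positive by (auto simp: add_grain_def ones_def)
  ultimately show ?thesis
    by (rule acyclic_orientable_mono)
qed

lemma orientable_imp_acyclic_orientable_or_ones:
  assumes n: "3 \<le> n" and stable: "wheel_stable n c" and "orientable n c"
  shows "acyclic_orientable n c \<or> c = ones n"
proof -
  obtain ori where bounded: "indeg_bounded n ori c"
    using assms(3) unfolding orientable_def by blast
  show ?thesis
  proof (cases "\<exists>j\<in>{1..n}. \<exists>k\<in>{1..n}. ori j \<and> \<not> ori k")
    case True
    then show ?thesis
      unfolding acyclic_orientable_def using bounded by blast
  next
    case False
    then have positive: "\<forall>v\<in>{1..n}. 1 \<le> c v"
      using bounded in_degree_eq_one_if_constant unfolding indeg_bounded_def by metis
    show ?thesis
    proof (cases "\<exists>v\<in>{1..n}. c v = 2")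
      case True
      then show ?thesis
        using acyclic_orientable_if_positive_with_two [OF n positive] by blast
    next
      case False
      then have "\<forall>v\<in>{1..n}. c v = ones n v"
        using positive wheel_stable_le [OF stable] by (force simp: ones_def)
      moreover have "wheel_stable n (ones n)"
        by (simp add: wheel_stable_def ones_def)
      ultimately show ?thesis
        using wheel_stable_eqI [OF stable] by blast
    qed
  qed
qed

lemma ssm_reachable_ones:
  assumes n: "3 \<le> n"
  shows "(ssm_trans n)\<^sup>*\<^sup>* (max_config n) (ones n)"
proof -
  define c where "c = (\<lambda>v. if v \<in> {1..n} then if v = 1 then 0 else if v = 2 then 2 else 1 else 0::nat)"
  have stable: "wheel_stable n c" "wheel_stable n (ones n)"
    unfolding wheel_stable_def c_def ones_def by auto
  have "indeg_bounded n (\<lambda>k. k = 1) c"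
    using n unfolding indeg_bounded_def in_degree_def c_def cyc_pred_def by auto
  moreover have "\<exists>j\<in>{1..n}. \<exists>k\<in>{1..n}. j = (1::nat) \<and> k \<noteq> 1"
    using n by (intro bexI [where x = 1] bexI [where x = 2]) auto
  ultimately have "acyclic_orientable n c"
    unfolding acyclic_orientable_def by (intro exI [of _ "\<lambda>k. k = 1"]) simp
  then have "(ssm_trans n)\<^sup>*\<^sup>* (max_config n) c"
    using asm_reachable_if_acyclic_orientable [OF n stable(1)] asm_reachable_imp_ssm_reachable [OF n]
    by blast
  moreover have "ssm_step n (add_grain c 2) (ones n)"
    unfolding ssm_step_iff
  proof (intro bexI conjI exI)
    show "(2::nat) \<in> {1..n}" "3 \<le> add_grain c 2 2"
      using n by (simp_all add: add_grain_def c_def)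
    show "{0, 1} \<subseteq> {0, cyc_pred n 2, cyc_succ n 2}"
      by (simp add: cyc_pred_def)
    show "ones n = ssm_topple n 2 {0, 1} (add_grain c 2)"
      using n by (auto simp: ssm_topple_def add_grain_def c_def ones_def)
  qed
  then have "ssm_trans n c (ones n)"
    unfolding ssm_trans_def using stable n by force
  ultimately show ?thesis
    by simp
qed

lemma ssm_reachable_iff:
  assumes n: "3 \<le> n" and stable: "wheel_stable n c"
  shows "(ssm_trans n)\<^sup>*\<^sup>* (max_config n) c \<longleftrightarrow> orientable n c"
proof
  assume reachable: "(ssm_trans n)\<^sup>*\<^sup>* (max_config n) c"
  have "orientable n (max_config n)"
    using n by (intro acyclic_orientable_imp_orientable acyclic_orientable_max_config) simp
  with reachable show "orientable n c"
    by (rule ssm_reachable_orientable [OF n])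
next
  assume "orientable n c"
  from orientable_imp_acyclic_orientable_or_ones [OF n stable this] show "(ssm_trans n)\<^sup>*\<^sup>* (max_config n) c"
  proof
    assume "acyclic_orientable n c"
    then have "(asm_trans n)\<^sup>*\<^sup>* (max_config n) c"
      using asm_reachable_iff [OF n stable] by simp
    then show ?thesis
      by (rule asm_reachable_imp_ssm_reachable [OF n])
  next
    assume "c = ones n"
    then show ?thesis
      using ssm_reachable_ones [OF n] by simp
  qed
qed

lemma asm_recurrent_iff_reachable:
  assumes "wheel_stable n c"
  shows "asm_recurrent n c \<longleftrightarrow> (asm_trans n)\<^sup>*\<^sup>* (max_config n) c"
proof -
  have "wheel_stable n e" if "asm_trans n d e" for d e
    using that unfolding asm_trans_def by blast
  from recurrent_iff_reachable_from [of "wheel_stable n", OF asm_reaches_max_config this assms]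
  show ?thesis
    unfolding asm_recurrent_def using assms by simp
qed

lemma ssm_recurrent_iff_reachable:
  assumes n: "3 \<le> n" and "wheel_stable n c"
  shows "ssm_recurrent n c \<longleftrightarrow> (ssm_trans n)\<^sup>*\<^sup>* (max_config n) c"
proof -
  have reaches: "(ssm_trans n)\<^sup>*\<^sup>* d (max_config n)" if "wheel_stable n d" for d
    using asm_reachable_imp_ssm_reachable [OF n asm_reaches_max_config [OF that]] .
  have "wheel_stable n e" if "ssm_trans n d e" for d e
    using that unfolding ssm_trans_def by blast
  from recurrent_iff_reachable_from [of "wheel_stable n", OF reaches this assms(2)]
  show ?thesis
    unfolding ssm_recurrent_def using assms(2) by simp
qed

theorem mainTheorem2:
  fixes n :: nat and c :: "nat \<Rightarrow> nat"
  assumes "n \<ge> 3" and "wheel_stable n c"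
  shows "(ssm_recurrent n c \<longleftrightarrow> (\<exists>ori. \<forall>i\<in>{1..n}. c i \<ge> cyc_indeg n ori i))
       \<and> (asm_recurrent n c \<longleftrightarrow> (\<exists>ori. cyc_acyclic n ori \<and> (\<forall>i\<in>{1..n}. c i \<ge> cyc_indeg n ori i)))"
proof -
  have n: "3 \<le> n" and n2: "2 \<le> n"
    using assms(1) by simp_all
  have "ssm_recurrent n c \<longleftrightarrow> orientable n c"
    using ssm_recurrent_iff_reachable [OF n assms(2)] ssm_reachable_iff [OF n assms(2)] by simp
  moreover have "asm_recurrent n c \<longleftrightarrow> acyclic_orientable n c"
    using asm_recurrent_iff_reachable [OF assms(2)] asm_reachable_iff [OF n assms(2)] by simp
  ultimately show ?thesis
    using orientable_iff [OF n2] acyclic_orientable_iff [OF n2] by simp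
qed

end
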